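(* Let $\beta,\gamma,\mu>0$, $0<p<\tfrac12$, $\delta=\beta/(\gamma+\mu)$ with $4(1-p)<\delta<\tfrac1p$. Then the Jacobian at $E_2$ of the $(S_0,S_1,A)$ subsystem of the temporary adoption model, $$J=\begin{pmatrix}-\beta A-\mu&0&-\beta S_0\\(1-p)\beta A&-\beta A-\mu&(1-p)\beta S_0-\beta S_1\\ p\beta A&\beta A&\beta(pS_0+S_1)-\gamma-\mu\end{pmatrix},$$ has exactly one eigenvalue with positive real part (which is real) and two eigenvalues with negative real part. In particular $E_2$ is a hyperbolic saddle with a one-dimensional unstable manifold.
   Context: The temporary adoption model is $S_0'=\mu-\beta S_0A-\mu S_0$, $S_1'=(1-p)\beta S_0A-\beta S_1A-\mu S_1$, $A'=\beta(pS_0+S_1)A-(\gamma+\mu)A$, $R'=\gamma A-\mu R$, with $S_0+S_1+A+R=1$. $E_2$ is the equilibrium with $A=A_2=\tfrac12(1+\tfrac{\gamma}{\mu})^{-1}\big[1-2\delta^{-1}-\sqrt{1-4(1-p)\delta^{-1}}\big]$, $S_0=1/(\delta(\frac{\gamma}{\mu}+1)A+1)$, $S_1=(1-p)\delta(\frac{\gamma}{\mu}+1)A/(\delta(\frac{\gamma}{\mu}+1)A+1)^2$, $R=\frac{\gamma}{\mu}A$. *)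

theory Defs
  imports Complex_Main "Jordan_Normal_Form.Char_Poly"
begin

definition tam_delta :: "real \<Rightarrow> real \<Rightarrow> real \<Rightarrow> real" where
  "tam_delta \<beta> \<gamma> \<mu> = \<beta> / (\<gamma> + \<mu>)"

definition E2_A :: "real \<Rightarrow> real \<Rightarrow> real \<Rightarrow> real \<Rightarrow> real" where
  "E2_A \<beta> \<gamma> \<mu> p = (let \<delta> = tam_delta \<beta> \<gamma> \<mu> in
     (1/2) * inverse (1 + \<gamma>/\<mu>) * (1 - 2 / \<delta> - sqrt (1 - 4 * (1 - p) / \<delta>)))"

definition E2_S0 :: "real \<Rightarrow> real \<Rightarrow> real \<Rightarrow> real \<Rightarrow> real" where
  "E2_S0 \<beta> \<gamma> \<mu> p = (let \<delta> = tam_delta \<beta> \<gamma> \<mu>; A = E2_A \<beta> \<gamma> \<mu> p in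
     1 / (\<delta> * (\<gamma>/\<mu> + 1) * A + 1))"

definition E2_S1 :: "real \<Rightarrow> real \<Rightarrow> real \<Rightarrow> real \<Rightarrow> real" where
  "E2_S1 \<beta> \<gamma> \<mu> p = (let \<delta> = tam_delta \<beta> \<gamma> \<mu>; A = E2_A \<beta> \<gamma> \<mu> p in
     (1 - p) * \<delta> * (\<gamma>/\<mu> + 1) * A / (\<delta> * (\<gamma>/\<mu> + 1) * A + 1)^2)"

definition tam_jacobian :: "real \<Rightarrow> real \<Rightarrow> real \<Rightarrow> real \<Rightarrow> real \<Rightarrow> real \<Rightarrow> real \<Rightarrow> real mat" where
  "tam_jacobian \<beta> \<gamma> \<mu> p S0 S1 A = mat_of_rows_list 3
     [[- \<beta> * A - \<mu>, 0, - \<beta> * S0],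
      [(1 - p) * \<beta> * A, - \<beta> * A - \<mu>, (1 - p) * \<beta> * S0 - \<beta> * S1],
      [p * \<beta> * A, \<beta> * A, \<beta> * (p * S0 + S1) - \<gamma> - \<mu>]]"

definition J_E2 :: "real \<Rightarrow> real \<Rightarrow> real \<Rightarrow> real \<Rightarrow> real mat" where
  "J_E2 \<beta> \<gamma> \<mu> p = tam_jacobian \<beta> \<gamma> \<mu> p (E2_S0 \<beta> \<gamma> \<mu> p) (E2_S1 \<beta> \<gamma> \<mu> p) (E2_A \<beta> \<gamma> \<mu> p)"

end

theory Submission
  imports Defs
begin

text \<open>At \<open>E\<^sub>2\<close> the \<open>A\<close>-equation balances, so the \<open>(3,3)\<close> entry of \<open>J\<close> vanishes. In terms of
  \<open>x = \<beta> A\<^sub>2 / \<mu>\<close>, which lies in \<open>(0, 1 - 2p)\<close> under the hypotheses on \<open>\<delta>\<close>, the trace of \<open>J\<close> is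
  \<open>-2\<mu>(1 + x) < 0\<close> and \<open>det J = \<beta> \<mu>\<^sup>2 x (1 - 2p - x) / (1 + x) > 0\<close>. The characteristic
  polynomial \<open>z\<^sup>3 - tr J z\<^sup>2 + c z - det J\<close> is negative at \<open>0\<close> and tends to \<open>+\<infinity>\<close>, so it has a positive
  real root \<open>r\<close>; dividing by \<open>z - r\<close> leaves \<open>z\<^sup>2 + (r - tr J) z + det J / r\<close>, whose coefficients
  are positive, so its two roots lie in the open left half-plane.\<close>

lemma det_2x2:
  assumes "(A :: 'a :: comm_ring_1 mat) \<in> carrier_mat 2 2"
  shows "det A = A $$ (0,0) * A $$ (1,1) - A $$ (0,1) * A $$ (1,0)"
  using assms
  by (subst laplace_expansion_row[OF assms, of 0])
     (simp_all add: numeral_2_eq_2 cofactor_def det_single mat_delete_carrier mat_delete_def)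

lemma det_3x3:
  assumes A: "(A :: 'a :: comm_ring_1 mat) \<in> carrier_mat 3 3"
  shows "det A = A $$ (0,0) * (A $$ (1,1) * A $$ (2,2) - A $$ (1,2) * A $$ (2,1))
    - A $$ (0,1) * (A $$ (1,0) * A $$ (2,2) - A $$ (1,2) * A $$ (2,0))
    + A $$ (0,2) * (A $$ (1,0) * A $$ (2,1) - A $$ (1,1) * A $$ (2,0))"
  using A
  by (subst laplace_expansion_row[OF A, of 0])
     (simp_all add: numeral_3_eq_3 numeral_2_eq_2 cofactor_def det_2x2 mat_delete_carrier
        mat_delete_def algebra_simps)

lemma char_poly_3x3:
  assumes A: "(A :: 'a :: comm_ring_1 mat) \<in> carrier_mat 3 3"
  shows "char_poly A = [:- det A,
      A $$ (0,0) * A $$ (1,1) + A $$ (0,0) * A $$ (2,2) + A $$ (1,1) * A $$ (2,2)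
        - A $$ (0,1) * A $$ (1,0) - A $$ (0,2) * A $$ (2,0) - A $$ (1,2) * A $$ (2,1),
      - (A $$ (0,0) + A $$ (1,1) + A $$ (2,2)), 1:]"
  unfolding char_poly_def det_3x3[OF char_poly_matrix_closed[OF A]] det_3x3[OF A]
  using A by (simp add: char_poly_matrix_def algebra_simps)

lemma quadratic_root_Re_neg:
  fixes u v :: real and z :: complex
  assumes u: "u > 0" and v: "v > 0" and root: "z\<^sup>2 + of_real u * z + of_real v = 0"
  shows "Re z < 0"
proof -
  have re: "(Re z)\<^sup>2 - (Im z)\<^sup>2 + u * Re z + v = 0"
    using arg_cong[OF root, of Re] by (simp add: power2_eq_square)
  have im: "Im z * (2 * Re z + u) = 0"
    using arg_cong[OF root, of Im] by (simp add: power2_eq_square algebra_simps)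
  show ?thesis
  proof (cases "Im z = 0")
    case True
    then have "(Re z)\<^sup>2 + u * Re z + v = 0" using re by simp
    moreover have "u * Re z \<ge> 0" if "Re z \<ge> 0" using that u by simp
    ultimately show ?thesis using v by (smt (verit) zero_le_power2)
  next
    case False
    then show ?thesis using im u by simp
  qed
qed

lemma quadratic_factorization_Re_neg:
  fixes u v :: real
  assumes u: "u > 0" and v: "v > 0"
  shows "\<exists>l2 l3 :: complex. [:of_real v, of_real u, 1:] = [:- l2, 1:] * [:- l3, 1:]
           \<and> Re l2 < 0 \<and> Re l3 < 0"
proof -
  define w where "w = csqrt (of_real (u\<^sup>2 - 4 * v))"
  define l2 where "l2 = (- of_real u + w) / 2"
  define l3 where "l3 = (- of_real u - w) / 2"
  have factor: "[:of_real v, of_real u, 1:] = [:- l2, 1:] * [:- l3, 1:]"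
  proof -
    have "l2 * l3 = ((of_real u)\<^sup>2 - w\<^sup>2) / 4"
      unfolding l2_def l3_def by (simp add: field_simps power2_eq_square)
    also have "w\<^sup>2 = of_real (u\<^sup>2 - 4 * v)" unfolding w_def by simp
    finally have "of_real v = l2 * l3" by simp
    moreover have "of_real u = - (l2 + l3)" unfolding l2_def l3_def by (simp add: field_simps)
    ultimately show ?thesis by (simp add: algebra_simps)
  qed
  have root: "l\<^sup>2 + of_real u * l + of_real v = 0" if "l = l2 \<or> l = l3" for l
  proof -
    have "poly [:of_real v, of_real u, 1:] l = 0" using that unfolding factor by auto
    then show ?thesis by (simp add: algebra_simps power2_eq_square)
  qed
  show ?thesis
    using factor quadratic_root_Re_neg[OF u v root] by blast
qed

lemma cubic_factorization_one_positive_root: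
  fixes c0 c1 c2 :: real
  assumes c0: "c0 < 0" and c2: "c2 > 0"
  shows "\<exists>l1 l2 l3 :: complex.
           map_poly of_real [:c0, c1, c2, 1:] = [:- l1, 1:] * [:- l2, 1:] * [:- l3, 1:]
           \<and> l1 \<in> \<real> \<and> Re l1 > 0 \<and> Re l2 < 0 \<and> Re l3 < 0"
proof -
  define q where "q = [:c0, c1, c2, 1:]"
  obtain b where b: "\<forall>x \<ge> b. poly q x \<ge> 1"
    using poly_pinfty_gt_lc[of q] unfolding q_def by auto
  have "poly q 0 < 0" "poly q (max b 1) \<ge> 1" using b c0 unfolding q_def by auto
  then obtain r where r: "0 < r" "poly q r = 0"
    using poly_IVT_pos[of 0 "max b 1" q] by fastforce
  define u where "u = c2 + r"
  define v where "v = - c0 / r"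
  have u: "u > 0" and v: "v > 0"
    using c0 c2 r(1) unfolding u_def v_def by (simp_all add: divide_neg_pos)
  have "c0 = - r * v" and "c1 = v - r * u"
    using r unfolding q_def u_def v_def by (simp_all add: field_simps)
  then have "q = [:- r, 1:] * [:v, u, 1:]"
    unfolding q_def u_def by (simp add: algebra_simps)
  then have "map_poly of_real q = [:- of_real r, 1:] * [:of_real v, of_real u, 1:]"
    by (simp add: hom_distribs)
  moreover obtain l2 l3 where "[:of_real v, of_real u, 1:] = [:- l2, 1:] * [:- l3, 1:]"
    and l: "Re l2 < 0" "Re l3 < 0"
    using quadratic_factorization_Re_neg[OF u v] by blast
  ultimately have "map_poly of_real q = [:- of_real r, 1:] * [:- l2, 1:] * [:- l3, 1:]"
    by (metis mult.assoc)
  then show ?thesis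
    using l r(1) unfolding q_def
    by (intro exI[of _ "of_real r"] exI[of _ l2] exI[of _ l3] conjI) simp_all
qed

lemma char_poly_3x3_factorization_trace_neg_det_pos:
  fixes J :: "real mat"
  assumes J: "J \<in> carrier_mat 3 3"
    and trace: "J $$ (0,0) + J $$ (1,1) + J $$ (2,2) < 0" and det: "det J > 0"
  shows "\<exists>l1 l2 l3 :: complex.
           char_poly (map_mat complex_of_real J) = [:- l1, 1:] * [:- l2, 1:] * [:- l3, 1:]
           \<and> l1 \<in> \<real> \<and> Re l1 > 0 \<and> Re l2 < 0 \<and> Re l3 < 0"
proof -
  obtain c1 where "char_poly J = [:- det J, c1, - (J $$ (0,0) + J $$ (1,1) + J $$ (2,2)), 1:]"
    using char_poly_3x3[OF J] by blast
  then have "char_poly (map_mat complex_of_real J)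
      = map_poly of_real [:- det J, c1, - (J $$ (0,0) + J $$ (1,1) + J $$ (2,2)), 1:]"
    using of_real_hom.char_poly_hom[OF J] by simp
  moreover have "- det J < 0" and "- (J $$ (0,0) + J $$ (1,1) + J $$ (2,2)) > 0"
    using trace det by simp_all
  ultimately show ?thesis
    using cubic_factorization_one_positive_root by metis
qed

lemma tam_jacobian_carrier: "tam_jacobian \<beta> \<gamma> \<mu> p S0 S1 A \<in> carrier_mat 3 3"
  unfolding tam_jacobian_def mat_of_rows_list_def carrier_mat_def by (simp add: eval_nat_numeral)

lemma J_E2_carrier: "J_E2 \<beta> \<gamma> \<mu> p \<in> carrier_mat 3 3"
  unfolding J_E2_def by (rule tam_jacobian_carrier)

text \<open>The rescaled adoption level \<open>x = \<beta> A\<^sub>2 / \<mu> = \<delta> (\<gamma>/\<mu> + 1) A\<^sub>2\<close> is the smaller root of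
  \<open>(1 + x)\<^sup>2 = \<delta> (p + x)\<close>; all coordinates of \<open>E\<^sub>2\<close> are rational in \<open>x\<close>.\<close>

definition tam_scaled_A :: "real \<Rightarrow> real \<Rightarrow> real" where
  "tam_scaled_A \<delta> p = (\<delta> - 2 - \<delta> * sqrt (1 - 4 * (1 - p) / \<delta>)) / 2"

lemma tam_scaled_A_bounds:
  fixes \<delta> p :: real
  defines "x \<equiv> tam_scaled_A \<delta> p"
  assumes p: "0 < p" "p < 1/2" and \<delta>: "4 * (1 - p) < \<delta>" "\<delta> < 1 / p"
  shows "0 < x" and "x < 1 - 2 * p" and "(1 + x)\<^sup>2 = \<delta> * (p + x)"
proof -
  define s where "s = \<delta> * sqrt (1 - 4 * (1 - p) / \<delta>)"
  have x: "x = (\<delta> - 2 - s) / 2" unfolding x_def s_def tam_scaled_A_def ..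
  have "\<delta> > 2" and "\<delta> * p < 1" using p \<delta> by (simp_all add: field_simps)
  have "1 - 4 * (1 - p) / \<delta> \<ge> 0" using \<delta> \<open>\<delta> > 2\<close> by (simp add: field_simps)
  then have s0: "s \<ge> 0" and s2: "s\<^sup>2 = \<delta>\<^sup>2 - 4 * (1 - p) * \<delta>"
    using \<open>\<delta> > 2\<close> unfolding s_def by (simp_all add: field_simps power2_eq_square)
  show "(1 + x)\<^sup>2 = \<delta> * (p + x)"
    using s2 unfolding x by (simp add: field_simps power2_eq_square)
  have "s\<^sup>2 < (\<delta> - 2)\<^sup>2" using s2 \<open>\<delta> * p < 1\<close> by (simp add: algebra_simps power2_eq_square)
  then have "s < \<delta> - 2" using s0 \<open>\<delta> > 2\<close> by (simp add: power_less_imp_less_base)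
  then show "0 < x" unfolding x by simp
  have "4 * (1 - p) * (4 * (1 - p)) < 4 * (1 - p) * \<delta>"
    using \<delta> p by (intro mult_strict_left_mono) auto
  then have "(\<delta> - 4 * (1 - p))\<^sup>2 < s\<^sup>2"
    using s2 by (simp add: algebra_simps power2_eq_square)
  then have "\<delta> - 4 * (1 - p) < s" using s0 by (rule power2_less_imp_less)
  then show "x < 1 - 2 * p" unfolding x by simp
qed

context
  fixes \<beta> \<gamma> \<mu> p :: real
  assumes \<beta>: "\<beta> > 0" and \<gamma>: "\<gamma> > 0" and \<mu>: "\<mu> > 0"
begin

lemma E2_coordinates:
  defines "x \<equiv> tam_scaled_A (tam_delta \<beta> \<gamma> \<mu>) p"
  shows "E2_A \<beta> \<gamma> \<mu> p = \<mu> * x / \<beta>"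
    and "E2_S0 \<beta> \<gamma> \<mu> p = 1 / (1 + x)"
    and "E2_S1 \<beta> \<gamma> \<mu> p = (1 - p) * x / (1 + x)\<^sup>2"
proof -
  define \<delta> where "\<delta> = tam_delta \<beta> \<gamma> \<mu>"
  have "\<delta> > 0" using \<beta> \<gamma> \<mu> unfolding \<delta>_def tam_delta_def by simp
  have "inverse (1 + \<gamma> / \<mu>) = \<mu> / (\<gamma> + \<mu>)"
    using \<gamma> \<mu> by (simp add: field_simps)
  also have "\<dots> = \<mu> * \<delta> / \<beta>"
    using \<beta> unfolding \<delta>_def tam_delta_def by simp
  finally have inv: "inverse (1 + \<gamma> / \<mu>) = \<mu> * \<delta> / \<beta>" .
  show A: "E2_A \<beta> \<gamma> \<mu> p = \<mu> * x / \<beta>"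
    unfolding E2_A_def Let_def \<delta>_def[symmetric] inv unfolding x_def tam_scaled_A_def \<delta>_def[symmetric]
    using \<beta> \<open>\<delta> > 0\<close> by (simp add: field_simps)
  have "\<gamma> / \<mu> + 1 = (\<gamma> + \<mu>) / \<mu>" using \<mu> by (simp add: field_simps)
  then have "\<delta> * (\<gamma> / \<mu> + 1) = \<beta> / \<mu>"
    using \<gamma> \<mu> unfolding \<delta>_def tam_delta_def by simp
  then have "tam_delta \<beta> \<gamma> \<mu> * (\<gamma> / \<mu> + 1) * E2_A \<beta> \<gamma> \<mu> p = x"
    using \<beta> \<mu> unfolding A \<delta>_def by simp
  then show "E2_S0 \<beta> \<gamma> \<mu> p = 1 / (1 + x)" and "E2_S1 \<beta> \<gamma> \<mu> p = (1 - p) * x / (1 + x)\<^sup>2"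
    unfolding E2_S0_def E2_S1_def Let_def by (simp_all add: mult.assoc add.commute)
qed

context
  assumes p: "0 < p" "p < 1/2"
    and \<delta>: "4 * (1 - p) < tam_delta \<beta> \<gamma> \<mu>" "tam_delta \<beta> \<gamma> \<mu> < 1 / p"
begin

text \<open>The \<open>A\<close>-equation at \<open>E\<^sub>2\<close>; it makes the \<open>(3,3)\<close> entry of the Jacobian vanish.\<close>

lemma E2_adoption_balance: "\<beta> * (p * E2_S0 \<beta> \<gamma> \<mu> p + E2_S1 \<beta> \<gamma> \<mu> p) = \<gamma> + \<mu>"
proof -
  define x where "x = tam_scaled_A (tam_delta \<beta> \<gamma> \<mu>) p"
  have "x > 0" and x: "(1 + x)\<^sup>2 = tam_delta \<beta> \<gamma> \<mu> * (p + x)"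
    using tam_scaled_A_bounds[OF p \<delta>] unfolding x_def by auto
  have "p * E2_S0 \<beta> \<gamma> \<mu> p + E2_S1 \<beta> \<gamma> \<mu> p = (p + x) / (1 + x)\<^sup>2"
    using \<open>x > 0\<close> unfolding E2_coordinates x_def[symmetric]
    by (simp add: divide_simps) (simp add: algebra_simps power2_eq_square)
  also have "\<dots> = 1 / tam_delta \<beta> \<gamma> \<mu>"
    using \<open>x > 0\<close> p unfolding x by simp
  finally show ?thesis using \<beta> \<gamma> \<mu> unfolding tam_delta_def by simp
qed

lemma J_E2_eq:
  defines "x \<equiv> tam_scaled_A (tam_delta \<beta> \<gamma> \<mu>) p"
  shows "J_E2 \<beta> \<gamma> \<mu> p = mat_of_rows_list 3
     [[- \<mu> * x - \<mu>, 0, - \<beta> / (1 + x)],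
      [(1 - p) * \<mu> * x, - \<mu> * x - \<mu>, (1 - p) * \<beta> / (1 + x)\<^sup>2],
      [p * \<mu> * x, \<mu> * x, 0]]"
proof -
  have "x > 0" using tam_scaled_A_bounds[OF p \<delta>] unfolding x_def by auto
  have key: "(1 - p) * \<beta> * (1 / (1 + x)) - \<beta> * ((1 - p) * x / (1 + x)\<^sup>2)
      = (1 - p) * \<beta> / (1 + x)\<^sup>2"
    using \<open>x > 0\<close> by (simp add: divide_simps) (simp add: algebra_simps power2_eq_square)
  have balance: "\<beta> * (p * E2_S0 \<beta> \<gamma> \<mu> p + E2_S1 \<beta> \<gamma> \<mu> p) - \<gamma> - \<mu> = 0"
    using E2_adoption_balance by simp
  show ?thesis
    unfolding J_E2_def tam_jacobian_def balance
    unfolding E2_coordinates x_def[symmetric] key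
    using \<beta> by (simp add: mult.assoc)
qed

lemma J_E2_trace_neg:
  "J_E2 \<beta> \<gamma> \<mu> p $$ (0,0) + J_E2 \<beta> \<gamma> \<mu> p $$ (1,1) + J_E2 \<beta> \<gamma> \<mu> p $$ (2,2) < 0"
  using mult_pos_pos[OF \<mu> tam_scaled_A_bounds(1)[OF p \<delta>]] \<mu>
  unfolding J_E2_eq by (simp add: mat_of_rows_list_def)

lemma J_E2_det_pos: "det (J_E2 \<beta> \<gamma> \<mu> p) > 0"
proof -
  define x where "x = tam_scaled_A (tam_delta \<beta> \<gamma> \<mu>) p"
  have "x > 0" "x < 1 - 2 * p" using tam_scaled_A_bounds[OF p \<delta>] unfolding x_def by auto
  have "det (J_E2 \<beta> \<gamma> \<mu> p) = \<beta> * \<mu>\<^sup>2 * x * (1 - 2 * p - x) / (1 + x)"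
    using \<open>x > 0\<close> unfolding det_3x3[OF J_E2_carrier] unfolding J_E2_eq x_def[symmetric]
    by (simp add: mat_of_rows_list_def divide_simps) (simp add: algebra_simps power2_eq_square)
  then show ?thesis using \<open>x > 0\<close> \<open>x < 1 - 2 * p\<close> \<beta> \<mu> by simp
qed

end

end

theorem mainTheorem7:
  fixes \<beta> \<gamma> \<mu> p :: real
  assumes "\<beta> > 0" and "\<gamma> > 0" and "\<mu> > 0"
    and "0 < p" and "p < 1/2"
    and "4 * (1 - p) < tam_delta \<beta> \<gamma> \<mu>" and "tam_delta \<beta> \<gamma> \<mu> < 1 / p"
  shows "\<exists>l1 l2 l3 :: complex.
           char_poly (map_mat complex_of_real (J_E2 \<beta> \<gamma> \<mu> p))
             = [:- l1, 1:] * [:- l2, 1:] * [:- l3, 1:]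
         \<and> l1 \<in> \<real> \<and> Re l1 > 0 \<and> Re l2 < 0 \<and> Re l3 < 0"
  using char_poly_3x3_factorization_trace_neg_det_pos
    [OF J_E2_carrier J_E2_trace_neg[OF assms] J_E2_det_pos[OF assms]] .

end
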